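(* Let $\alpha,\beta\in\Bbbk^n$, let $\mathcal H=\mathcal H(\alpha,\beta,0)$ and let $M$ be the adjacency matrix of $Q$. Then the matrix-valued Hilbert series of $\mathcal H$ is \[h_{\mathcal H}(t)=(I-Mt+Mt^3-It^4)^{-1}=(I-Mt+It^2)^{-1}(1-t^2)^{-1}.\]
   Context: $\Bbbk$ is an algebraically closed field of characteristic zero. Fix $n\ge1$; indices mod $n$, $Q_0=\{0,\dots,n-1\}$. $Q$ is the quiver with vertices $Q_0$ and arrows $u_i:i\to i+1$, $d_i:i+1\to i$; paths are written left to right, $e_i$ is the trivial path at $i$. $\mathcal H(\alpha,\beta,0)$ is $\Bbbk Q$ modulo the relations $d_{i-1}u_{i-1}u_i=\alpha_iu_id_iu_i+\beta_iu_iu_{i+1}d_{i+1}$ and $d_id_{i-1}u_{i-1}=\alpha_id_iu_id_i+\beta_iu_{i+1}d_{i+1}d_i$ for all $i\in Q_0$, graded by path length. The adjacency matrix $M\in M_n(\mathbb N)$ has $(i,j)$ entry the number of arrows from $i$ to $j$. The matrix-valued Hilbert series is $\sum_kH_kt^k$ with $(H_k)_{ij}=\dim_\Bbbk e_i\mathcal H_ke_j$. *)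

theory Defs
  imports "HOL-Computational_Algebra.Formal_Power_Series"
          "HOL-Computational_Algebra.Polynomial"
          "HOL-Library.Function_Algebras"
          "Jordan_Normal_Form.Matrix"
begin

text \<open>Arrows of Q: (True, i) is u_i : i -> i+1, (False, i) is d_i : i+1 -> i (indices mod n).\<close>
type_synonym arrow = "bool \<times> nat"
text \<open>A path is a start vertex together with a list of arrows, read left to right.
  The trivial path e_i is (i, []).\<close>
type_synonym path = "nat \<times> arrow list"

definition arr_src :: "nat \<Rightarrow> arrow \<Rightarrow> nat" where
  "arr_src n a = (if fst a then snd a mod n else Suc (snd a) mod n)"

definition arr_tgt :: "nat \<Rightarrow> arrow \<Rightarrow> nat" where
  "arr_tgt n a = (if fst a then Suc (snd a) mod n else snd a mod n)"

fun is_walk :: "nat \<Rightarrow> nat \<Rightarrow> arrow list \<Rightarrow> bool" where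
  "is_walk n v [] = True"
| "is_walk n v (a # as) = (snd a < n \<and> arr_src n a = v \<and> is_walk n (arr_tgt n a) as)"

fun walk_end :: "nat \<Rightarrow> nat \<Rightarrow> arrow list \<Rightarrow> nat" where
  "walk_end n v [] = v"
| "walk_end n v (a # as) = walk_end n (arr_tgt n a) as"

definition valid_path :: "nat \<Rightarrow> path \<Rightarrow> bool" where
  "valid_path n p = (fst p < n \<and> is_walk n (fst p) (snd p))"

text \<open>Paths of length k from i to j (i.e. the basis of e_i (kQ)_k e_j).\<close>
definition paths_of :: "nat \<Rightarrow> nat \<Rightarrow> nat \<Rightarrow> nat \<Rightarrow> path set" where
  "paths_of n k i j = {p. valid_path n p \<and> fst p = i \<and> length (snd p) = k \<and> walk_end n i (snd p) = j}"

text \<open>Elements of the path algebra kQ are represented as coefficient functions on paths.\<close>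
definition fscale :: "'a::field \<Rightarrow> (path \<Rightarrow> 'a) \<Rightarrow> (path \<Rightarrow> 'a)" where
  "fscale c f = (\<lambda>q. c * f q)"

definition pvec :: "path \<Rightarrow> path \<Rightarrow> 'a::field" where
  "pvec p = (\<lambda>q. if q = p then 1 else 0)"

text \<open>Multiplication in kQ (concatenation of paths, zero if they do not compose).\<close>
definition pmult :: "nat \<Rightarrow> (path \<Rightarrow> 'a::field) \<Rightarrow> (path \<Rightarrow> 'a) \<Rightarrow> path \<Rightarrow> 'a" where
  "pmult n f g = (\<lambda>(v, cs). \<Sum>m\<le>length cs. f (v, take m cs) * g (walk_end n v (take m cs), drop m cs))"

abbreviation U :: "nat \<Rightarrow> arrow" where "U i \<equiv> (True, i)"
abbreviation D :: "nat \<Rightarrow> arrow" where "D i \<equiv> (False, i)"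

definition rel1 :: "nat \<Rightarrow> (nat \<Rightarrow> 'a::field) \<Rightarrow> (nat \<Rightarrow> 'a) \<Rightarrow> nat \<Rightarrow> path \<Rightarrow> 'a" where
  "rel1 n \<alpha> \<beta> i =
     pvec (i, [D ((i + n - 1) mod n), U ((i + n - 1) mod n), U i])
     - fscale (\<alpha> i) (pvec (i, [U i, D i, U i]))
     - fscale (\<beta> i) (pvec (i, [U i, U (Suc i mod n), D (Suc i mod n)]))"

definition rel2 :: "nat \<Rightarrow> (nat \<Rightarrow> 'a::field) \<Rightarrow> (nat \<Rightarrow> 'a) \<Rightarrow> nat \<Rightarrow> path \<Rightarrow> 'a" where
  "rel2 n \<alpha> \<beta> i =
     pvec (Suc i mod n, [D i, D ((i + n - 1) mod n), U ((i + n - 1) mod n)])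
     - fscale (\<alpha> i) (pvec (Suc i mod n, [D i, U i, D i]))
     - fscale (\<beta> i) (pvec (Suc i mod n, [U (Suc i mod n), D (Suc i mod n), D i]))"

definition rels :: "nat \<Rightarrow> (nat \<Rightarrow> 'a::field) \<Rightarrow> (nat \<Rightarrow> 'a) \<Rightarrow> (path \<Rightarrow> 'a) set" where
  "rels n \<alpha> \<beta> = {rel1 n \<alpha> \<beta> i | i. i < n} \<union> {rel2 n \<alpha> \<beta> i | i. i < n}"

definition rel_ideal :: "nat \<Rightarrow> (nat \<Rightarrow> 'a::field) \<Rightarrow> (nat \<Rightarrow> 'a) \<Rightarrow> (path \<Rightarrow> 'a) set" where
  "rel_ideal n \<alpha> \<beta> = Modules.module.span fscale
     {pmult n (pmult n (pvec p) r) (pvec q) | p r q.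
        valid_path n p \<and> valid_path n q \<and> r \<in> rels n \<alpha> \<beta>}"

definition comp_space :: "nat \<Rightarrow> nat \<Rightarrow> nat \<Rightarrow> nat \<Rightarrow> (path \<Rightarrow> 'a::field) set" where
  "comp_space n k i j = {f. \<forall>p. f p \<noteq> 0 \<longrightarrow> p \<in> paths_of n k i j}"

definition hdim :: "nat \<Rightarrow> (nat \<Rightarrow> 'a::field) \<Rightarrow> (nat \<Rightarrow> 'a) \<Rightarrow> nat \<Rightarrow> nat \<Rightarrow> nat \<Rightarrow> nat" where
  "hdim n \<alpha> \<beta> k i j =
     Vector_Spaces.vector_space.dim fscale (comp_space n k i j :: (path \<Rightarrow> 'a) set)
     - Vector_Spaces.vector_space.dim fscale (rel_ideal n \<alpha> \<beta> \<inter> comp_space n k i j)"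

definition hilbert_matrix :: "nat \<Rightarrow> (nat \<Rightarrow> 'a::field) \<Rightarrow> (nat \<Rightarrow> 'a) \<Rightarrow> int fps mat" where
  "hilbert_matrix n \<alpha> \<beta> = mat n n (\<lambda>(i, j). Abs_fps (\<lambda>k. int (hdim n \<alpha> \<beta> k i j)))"

definition adjacency_matrix :: "nat \<Rightarrow> int mat" where
  "adjacency_matrix n = mat n n (\<lambda>(i, j).
     int (card {a :: arrow. snd a < n \<and> arr_src n a = i \<and> arr_tgt n a = j}))"

end

theory Submission
  imports Defs
begin

(* A path of Q is determined by its start vertex and its word of directions (True for an arrow
   u_i, False for an arrow d_i).  Read from left to right, the two families of relations are the
   rewriting rules F t T -> alpha_i (t, not t, t) + beta_i (T, t, F) on such words.  Every rewriting
   step decreases the number of pairs F ... T, and the only overlap of two redexes, FFTT,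
   resolves; so by the diamond lemma the paths whose word has no factor F ? T give a basis of H.
   These are the words T^a (FT)^m F^b.  Counting them, (1 - t^2) h_H(t) has as (i, j) entry the
   generating function of the walks u^a d^b from i to j, and these satisfy the recurrence of
   (I - Mt + It^2)^{-1}, because I - Mt + It^2 = (I - tS)(I - tS^{-1}) for the cyclic shift S.
   Both matrices are symmetric, which gives the second inverse law. *)

section \<open>Paths as words\<close>

definition step :: "nat \<Rightarrow> nat \<Rightarrow> bool \<Rightarrow> nat" where
  "step n v b = (if b then Suc v mod n else (v + n - 1) mod n)"

definition endpoint :: "nat \<Rightarrow> nat \<Rightarrow> bool list \<Rightarrow> nat" where
  "endpoint n = foldl (step n)"

definition arrow_from :: "nat \<Rightarrow> nat \<Rightarrow> bool \<Rightarrow> arrow" where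
  "arrow_from n v b = (if b then U v else D (step n v False))"

fun arrows_of :: "nat \<Rightarrow> nat \<Rightarrow> bool list \<Rightarrow> arrow list" where
  "arrows_of n v [] = []"
| "arrows_of n v (b # bs) = arrow_from n v b # arrows_of n (step n v b) bs"

abbreviation word_path :: "nat \<Rightarrow> nat \<Rightarrow> bool list \<Rightarrow> path" where
  "word_path n v bs \<equiv> (v, arrows_of n v bs)"

definition displacement :: "bool list \<Rightarrow> int" where
  "displacement bs = (\<Sum>b\<leftarrow>bs. if b then 1 else - 1)"

lemma displacement_simps [simp]:
  "displacement [] = 0"
  "displacement (b # bs) = (if b then 1 else - 1) + displacement bs"
  "displacement (bs @ cs) = displacement bs + displacement cs"
  by (simp_all add: displacement_def)

lemma endpoint_simps [simp]:
  "endpoint n v [] = v"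
  "endpoint n v (b # bs) = endpoint n (step n v b) bs"
  "endpoint n v (bs @ cs) = endpoint n (endpoint n v bs) cs"
  by (simp_all add: endpoint_def)

lemma step_lt: "0 < n \<Longrightarrow> step n v b < n"
  by (simp add: step_def)

lemma int_step:
  assumes "0 < n"
  shows "int (step n v b) = (int v + (if b then 1 else - 1)) mod int n"
proof -
  have "int ((v + n - 1) mod n) = (int v - 1 + int n) mod int n"
    using assms by (simp add: zmod_int of_nat_diff algebra_simps)
  then show ?thesis by (simp add: step_def zmod_int add.commute)
qed

lemma mod_add_eq_iff: "((x::int) + d) mod m = y mod m \<longleftrightarrow> x mod m = (y - d) mod m"
  by (simp add: mod_eq_dvd_iff algebra_simps)

lemma step_eq_iff:
  assumes "0 < n" and "u < n" and "v < n"
  shows "step n u b = v \<longleftrightarrow> u = step n v (\<not> b)"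
proof -
  define d :: int where "d = (if b then 1 else - 1)"
  have u: "int u mod int n = int u" and v: "int v mod int n = int v"
    using assms by (simp_all add: mod_pos_pos_trivial)
  have "step n u b = v \<longleftrightarrow> (int u + d) mod int n = int v mod int n"
    unfolding v int_step[OF assms(1), symmetric] d_def by linarith
  also have "\<dots> \<longleftrightarrow> int u mod int n = (int v - d) mod int n"
    by (rule mod_add_eq_iff)
  also have "\<dots> \<longleftrightarrow> int u = int (step n v (\<not> b))"
    unfolding u int_step[OF assms(1)] d_def by (cases b) simp_all
  also have "\<dots> \<longleftrightarrow> u = step n v (\<not> b)"
    by simp
  finally show ?thesis .
qed

lemma eq_step_iff:
  assumes "0 < n" and "u < n" and "v < n"
  shows "v = step n u True \<longleftrightarrow> u = step n v False"
    and "v = step n u False \<longleftrightarrow> u = step n v True"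
  using step_eq_iff[OF assms, of True] step_eq_iff[OF assms, of False] by (simp_all add: eq_commute)

lemma step_step:
  assumes "0 < n" and "w < n"
  shows "step n (step n w True) False = w" and "step n (step n w False) True = w"
  using step_eq_iff[OF assms(1) assms(2) step_lt[OF assms(1)]] by (metis (full_types))+

lemma int_endpoint:
  assumes "0 < n" and "v < n"
  shows "int (endpoint n v bs) = (int v + displacement bs) mod int n"
  using assms(2)
proof (induction bs arbitrary: v)
  case (Cons b bs)
  have "int (endpoint n v (b # bs)) = (int (step n v b) + displacement bs) mod int n"
    using Cons.IH step_lt[OF assms(1)] by simp
  also have "\<dots> = (int v + displacement (b # bs)) mod int n"
    by (simp add: int_step[OF assms(1)] mod_add_left_eq add.assoc)
  finally show ?case .
qed simp

lemma endpoint_lt: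
  assumes "0 < n" and "v < n"
  shows "endpoint n v bs < n"
proof -
  have "int (endpoint n v bs) < int n"
    using assms by (simp add: int_endpoint)
  then show ?thesis by simp
qed

lemma endpoint_eqI:
  assumes "0 < n" and "v < n" and "displacement bs = displacement cs"
  shows "endpoint n v bs = endpoint n v cs"
proof -
  have "int (endpoint n v bs) = int (endpoint n v cs)"
    using assms by (simp add: int_endpoint)
  then show ?thesis by simp
qed

lemma endpoint_eq_iff_dvd:
  assumes "0 < n" and "i < n" and "j < n"
  shows "endpoint n i bs = j \<longleftrightarrow> int n dvd int i + displacement bs - int j"
proof -
  have "endpoint n i bs = j \<longleftrightarrow> (int i + displacement bs) mod int n = int j mod int n"
    using assms by (simp add: int_endpoint[OF assms(1,2), symmetric] flip: of_nat_eq_iff)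
  then show ?thesis by (simp add: mod_eq_dvd_iff)
qed

lemma arrow_from_eq_iff:
  assumes "0 < n" and "v < n"
  shows "snd a < n \<and> arr_src n a = v \<longleftrightarrow> a = arrow_from n v (fst a)"
proof -
  obtain b s where a: "a = (b, s)" by fastforce
  show ?thesis
  proof (cases b)
    case True
    then show ?thesis using assms by (auto simp: a arr_src_def arrow_from_def)
  next
    case False
    have "arr_src n a = step n s True" by (simp add: a False arr_src_def step_def)
    then show ?thesis
      using step_eq_iff[OF assms(1) _ assms(2), of s True] step_lt[OF assms(1), of v False]
      by (auto simp: a False arrow_from_def)
  qed
qed

lemma arr_tgt_arrow_from [simp]: "arr_tgt n (arrow_from n v b) = step n v b"
  by (simp add: arr_tgt_def arrow_from_def step_def)

lemma map_fst_arrows_of [simp]: "map fst (arrows_of n v bs) = bs"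
  by (induction bs arbitrary: v) (simp_all add: arrow_from_def)

lemma arrows_of_eq_iff [simp]: "arrows_of n v bs = arrows_of n v cs \<longleftrightarrow> bs = cs"
  by (metis map_fst_arrows_of)

lemma length_arrows_of [simp]: "length (arrows_of n v bs) = length bs"
  by (induction bs arbitrary: v) simp_all

lemma arrows_of_append: "arrows_of n v (bs @ cs) = arrows_of n v bs @ arrows_of n (endpoint n v bs) cs"
  by (induction bs arbitrary: v) simp_all

lemma walk_end_arrows_of [simp]: "walk_end n v (arrows_of n v bs) = endpoint n v bs"
  by (induction bs arbitrary: v) simp_all

lemma is_walk_iff:
  assumes "0 < n" and "v < n"
  shows "is_walk n v cs \<longleftrightarrow> arrows_of n v (map fst cs) = cs"
  using assms(2)
proof (induction cs arbitrary: v)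
  case (Cons a cs)
  obtain b s where a: "a = (b, s)" by fastforce
  have "is_walk n v (a # cs) \<longleftrightarrow> a = arrow_from n v b \<and> is_walk n (arr_tgt n a) cs"
    using arrow_from_eq_iff[OF assms(1) Cons.prems, of a] by (simp add: a) blast
  also have "\<dots> \<longleftrightarrow> a = arrow_from n v b \<and> is_walk n (step n v b) cs"
    by (metis arr_tgt_arrow_from)
  also have "\<dots> \<longleftrightarrow> a = arrow_from n v b \<and> arrows_of n (step n v b) (map fst cs) = cs"
    using Cons.IH[OF step_lt[OF assms(1)]] by simp
  also have "\<dots> \<longleftrightarrow> arrows_of n v (map fst (a # cs)) = a # cs"
    by (auto simp: a)
  finally show ?case .
qed simp

lemma valid_path_iff: "0 < n \<Longrightarrow> valid_path n (v, cs) \<longleftrightarrow> v < n \<and> arrows_of n v (map fst cs) = cs"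
  using is_walk_iff by (auto simp: valid_path_def)

lemma valid_word_path: "0 < n \<Longrightarrow> v < n \<Longrightarrow> valid_path n (word_path n v bs)"
  by (simp add: valid_path_iff)

lemma valid_path_iff_word_path:
  "0 < n \<Longrightarrow> valid_path n p \<longleftrightarrow> (\<exists>v bs. v < n \<and> p = word_path n v bs)"
  by (cases p) (auto simp: valid_path_iff, metis map_fst_arrows_of)

lemma paths_of_eq:
  assumes "0 < n" and "i < n"
  shows "paths_of n k i j = word_path n i ` {bs. length bs = k \<and> endpoint n i bs = j}"
  unfolding paths_of_def valid_path_iff_word_path[OF assms(1)] using assms(2) by auto

lemma word_path_in_paths_of:
  "0 < n \<Longrightarrow> i < n \<Longrightarrow>
   word_path n v bs \<in> paths_of n k i j \<longleftrightarrow> v = i \<and> length bs = k \<and> endpoint n i bs = j"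
  by (auto simp: paths_of_eq)

lemma finite_paths_of:
  assumes "0 < n" and "i < n"
  shows "finite (paths_of n k i j)"
proof -
  have "finite {bs :: bool list. length bs = k}"
    using finite_lists_length_eq[of "UNIV :: bool set" k] by simp
  then show ?thesis
    unfolding paths_of_eq[OF assms] by (auto intro: finite_subset)
qed

section \<open>Rewriting words\<close>

definition redex :: "bool \<Rightarrow> bool list" where
  "redex t = [False, t, True]"

definition reduct1 :: "bool \<Rightarrow> bool list" where
  "reduct1 t = [t, \<not> t, t]"

definition reduct2 :: "bool \<Rightarrow> bool list" where
  "reduct2 t = [True, t, False]"

(* The coefficients of a redex starting at vertex w: rel1 i (redex FTT) starts at vertex i,
   rel2 i (redex FFT) at vertex i + 1, and both carry alpha i and beta i. *)
definition rel_index :: "nat \<Rightarrow> nat \<Rightarrow> bool \<Rightarrow> nat" where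
  "rel_index n w t = (if t then w else step n w False)"

lemma reduct_invariants:
  "length (reduct1 t) = length (redex t)" "length (reduct2 t) = length (redex t)"
  "displacement (reduct1 t) = displacement (redex t)" "displacement (reduct2 t) = displacement (redex t)"
  by (cases t; simp add: redex_def reduct1_def reduct2_def)+

lemma endpoint_reduct_word:
  assumes "0 < n" and "w < n"
  shows "endpoint n w (reduct1 t) = endpoint n w (redex t)"
    and "endpoint n w (reduct2 t) = endpoint n w (redex t)"
  by (rule endpoint_eqI[OF assms], simp add: reduct_invariants)+

lemma endpoint_reduct:
  assumes "0 < n" and "v < n"
  shows "endpoint n v (X @ reduct1 t @ Y) = endpoint n v (X @ redex t @ Y)"
    and "endpoint n v (X @ reduct2 t @ Y) = endpoint n v (X @ redex t @ Y)"
  using endpoint_reduct_word[OF assms(1) endpoint_lt[OF assms, of X]] by simp_all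

fun leftmost_redex :: "bool list \<Rightarrow> (bool list \<times> bool \<times> bool list) option" where
  "leftmost_redex (False # t # True # Y) = Some ([], t, Y)"
| "leftmost_redex (b # bs) = map_option (\<lambda>(X, t, Y). (b # X, t, Y)) (leftmost_redex bs)"
| "leftmost_redex [] = None"

lemma leftmost_redex_SomeD: "leftmost_redex bs = Some (X, t, Y) \<Longrightarrow> bs = X @ redex t @ Y"
  by (induction bs arbitrary: X rule: leftmost_redex.induct) (auto simp: redex_def)

lemma leftmost_redex_Cons:
  "(\<And>t Y. b # bs \<noteq> False # t # True # Y) \<Longrightarrow>
   leftmost_redex (b # bs) = map_option (\<lambda>(X, t, Y). (b # X, t, Y)) (leftmost_redex bs)"
  by (cases "b # bs" rule: leftmost_redex.cases) auto

lemma leftmost_redex_Cons_eq_None: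
  "leftmost_redex (c # bs) = None \<longleftrightarrow> leftmost_redex bs = None \<and> (c \<or> (\<nexists>t Y. bs = t # True # Y))"
  by (cases "c # bs" rule: leftmost_redex.cases) auto

lemma leftmost_redex_append_redex:
  "\<exists>X0 t0 Y0. leftmost_redex (X @ redex t @ Y) = Some (X0, t0, Y0) \<and>
     (X0 = X \<and> t0 = t \<and> Y0 = Y
      \<or> X = X0 @ [False] \<and> t0 = False \<and> t = True \<and> Y0 = True # Y
      \<or> (\<exists>Z. X = X0 @ redex t0 @ Z \<and> Y0 = Z @ redex t @ Y))"
proof (induction X)
  case Nil
  then show ?case by (simp add: redex_def)
next
  case (Cons c X)
  show ?case
  proof (cases "\<exists>t' Y'. c # X @ redex t @ Y = False # t' # True # Y'")
    case True
    then obtain t' Y' where e: "c # X @ redex t @ Y = False # t' # True # Y'" by blast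
    then have "X = [] \<and> t' = False \<and> t = True \<and> Y' = True # Y
        \<or> (\<exists>Z. X = t' # True # Z \<and> Y' = Z @ redex t @ Y)"
      by (cases X; cases "tl X") (auto simp: redex_def)
    then show ?thesis using e by (auto simp: redex_def)
  next
    case False
    then show ?thesis using Cons.IH by (auto simp: leftmost_redex_Cons)
  qed
qed

fun inversions :: "bool list \<Rightarrow> nat" where
  "inversions [] = 0"
| "inversions (b # bs) = (if b then 0 else count_list bs True) + inversions bs"

lemma inversions_append:
  "inversions (X @ Y) = inversions X + inversions Y + count_list X False * count_list Y True"
  by (induction X) auto

lemma inversions_reduct:
  "inversions (X @ reduct1 t @ Y) < inversions (X @ redex t @ Y)"
  "inversions (X @ reduct2 t @ Y) < inversions (X @ redex t @ Y)"
  by (cases t; simp add: inversions_append redex_def reduct1_def reduct2_def)+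

function normal_form ::
  "nat \<Rightarrow> (nat \<Rightarrow> 'a::field) \<Rightarrow> (nat \<Rightarrow> 'a) \<Rightarrow> nat \<Rightarrow> bool list \<Rightarrow> bool list \<Rightarrow> 'a" where
  "normal_form n \<alpha> \<beta> v bs = (case leftmost_redex bs of
       None \<Rightarrow> (\<lambda>w. if w = bs then 1 else 0)
     | Some (X, t, Y) \<Rightarrow>
         (\<lambda>w. \<alpha> (rel_index n (endpoint n v X) t) * normal_form n \<alpha> \<beta> v (X @ reduct1 t @ Y) w
            + \<beta> (rel_index n (endpoint n v X) t) * normal_form n \<alpha> \<beta> v (X @ reduct2 t @ Y) w))"
  by pat_completeness auto
termination
  by (relation "measure (\<lambda>(n, \<alpha>, \<beta>, v, bs). inversions bs)")
    (auto dest!: leftmost_redex_SomeD simp: inversions_reduct)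

declare normal_form.simps [simp del]

definition contract_redex ::
  "nat \<Rightarrow> (nat \<Rightarrow> 'a::field) \<Rightarrow> (nat \<Rightarrow> 'a) \<Rightarrow> nat \<Rightarrow> bool list \<Rightarrow> bool \<Rightarrow> bool list \<Rightarrow> bool list \<Rightarrow> 'a" where
  "contract_redex n \<alpha> \<beta> v X t Y =
     (\<lambda>w. \<alpha> (rel_index n (endpoint n v X) t) * normal_form n \<alpha> \<beta> v (X @ reduct1 t @ Y) w
        + \<beta> (rel_index n (endpoint n v X) t) * normal_form n \<alpha> \<beta> v (X @ reduct2 t @ Y) w)"

lemma normal_form_normal:
  "leftmost_redex bs = None \<Longrightarrow> normal_form n \<alpha> \<beta> v bs = (\<lambda>w. if w = bs then 1 else 0)"
  by (simp add: normal_form.simps)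

lemma normal_form_leftmost:
  "leftmost_redex bs = Some (X, t, Y) \<Longrightarrow> normal_form n \<alpha> \<beta> v bs = contract_redex n \<alpha> \<beta> v X t Y"
  by (simp add: normal_form.simps contract_redex_def)

lemma normal_form_support:
  "normal_form n \<alpha> \<beta> v bs w \<noteq> 0 \<Longrightarrow>
   leftmost_redex w = None \<and> length w = length bs \<and> displacement w = displacement bs"
proof (induction n \<alpha> \<beta> v bs rule: normal_form.induct)
  case (1 n \<alpha> \<beta> v bs)
  show ?case
  proof (cases "leftmost_redex bs")
    case None
    then show ?thesis using "1.prems" by (auto simp: normal_form_normal split: if_splits)
  next
    case (Some r)
    then obtain X t Y where r: "leftmost_redex bs = Some (X, t, Y)" by (cases r) auto
    with "1.prems" have "normal_form n \<alpha> \<beta> v (X @ reduct1 t @ Y) w \<noteq> 0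
        \<or> normal_form n \<alpha> \<beta> v (X @ reduct2 t @ Y) w \<noteq> 0"
      by (auto simp: normal_form_leftmost contract_redex_def)
    then show ?thesis
      using "1.IH"[OF r refl refl] leftmost_redex_SomeD[OF r] reduct_invariants[of t] by auto
  qed
qed

context
  fixes n :: nat and \<alpha> \<beta> :: "nat \<Rightarrow> 'a::field" and v :: nat
  assumes n: "0 < n" and v: "v < n"
begin

(* Local confluence for the two ways in which two redexes can meet, assuming normal_form_redex
   for all words with fewer inversions. *)

lemma contract_overlap:
  assumes IH: "\<And>X t Y'. inversions (X @ redex t @ Y') < inversions ((X0 @ [False]) @ redex True @ Y) \<Longrightarrow>
      normal_form n \<alpha> \<beta> v (X @ redex t @ Y') = contract_redex n \<alpha> \<beta> v X t Y'"
  shows "contract_redex n \<alpha> \<beta> v X0 False (True # Y) = contract_redex n \<alpha> \<beta> v (X0 @ [False]) True Y"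
proof -
  let ?N = "normal_form n \<alpha> \<beta> v"
  define w0 where "w0 = endpoint n v X0"
  have w0: "w0 < n" using endpoint_lt[OF n v] by (simp add: w0_def)
  have "?N (X0 @ [True] @ redex False @ Y) = (\<lambda>w. \<alpha> w0 * ?N (X0 @ [True] @ reduct1 False @ Y) w
      + \<beta> w0 * ?N (X0 @ [True] @ reduct2 False @ Y) w)"
    using IH[of "X0 @ [True]" False Y] step_step(1)[OF n w0]
    by (simp add: inversions_append redex_def reduct1_def reduct2_def rel_index_def contract_redex_def w0_def)
  moreover have "?N (X0 @ redex True @ False # Y) = (\<lambda>w. \<alpha> w0 * ?N (X0 @ reduct1 True @ False # Y) w
      + \<beta> w0 * ?N (X0 @ reduct2 True @ False # Y) w)"
    using IH[of X0 True "False # Y"]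
    by (simp add: inversions_append redex_def reduct1_def reduct2_def rel_index_def contract_redex_def w0_def)
  ultimately have "?N (X0 @ reduct2 False @ True # Y) = ?N ((X0 @ [False]) @ reduct2 True @ Y)"
    by (simp add: redex_def reduct1_def reduct2_def)
  moreover have "?N (X0 @ reduct1 False @ True # Y) = ?N ((X0 @ [False]) @ reduct1 True @ Y)"
    by (simp add: reduct1_def)
  ultimately show ?thesis
    by (simp add: contract_redex_def rel_index_def)
qed

lemma contract_disjoint:
  assumes IH: "\<And>X t Y'. inversions (X @ redex t @ Y') < inversions ((X0 @ redex t0 @ Z) @ redex t1 @ Y) \<Longrightarrow>
      normal_form n \<alpha> \<beta> v (X @ redex t @ Y') = contract_redex n \<alpha> \<beta> v X t Y'"
  shows "contract_redex n \<alpha> \<beta> v X0 t0 (Z @ redex t1 @ Y) = contract_redex n \<alpha> \<beta> v (X0 @ redex t0 @ Z) t1 Y"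
proof -
  let ?N = "normal_form n \<alpha> \<beta> v"
  define c0 where "c0 = rel_index n (endpoint n v X0) t0"
  define c1 where "c1 = rel_index n (endpoint n v (X0 @ redex t0 @ Z)) t1"
  have "rel_index n (endpoint n v (X0 @ reduct1 t0 @ Z)) t1 = c1"
    and "rel_index n (endpoint n v (X0 @ reduct2 t0 @ Z)) t1 = c1"
    using endpoint_reduct[OF n v, of X0 t0 Z] by (simp_all add: c1_def)
  then have "?N (X0 @ reduct1 t0 @ Z @ redex t1 @ Y) = (\<lambda>w. \<alpha> c1 * ?N (X0 @ reduct1 t0 @ Z @ reduct1 t1 @ Y) w
                + \<beta> c1 * ?N (X0 @ reduct1 t0 @ Z @ reduct2 t1 @ Y) w)"
    and "?N (X0 @ reduct2 t0 @ Z @ redex t1 @ Y) = (\<lambda>w. \<alpha> c1 * ?N (X0 @ reduct2 t0 @ Z @ reduct1 t1 @ Y) w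
                + \<beta> c1 * ?N (X0 @ reduct2 t0 @ Z @ reduct2 t1 @ Y) w)"
    using IH[of "X0 @ reduct1 t0 @ Z" t1 Y] IH[of "X0 @ reduct2 t0 @ Z" t1 Y]
      inversions_reduct[of X0 t0 "Z @ redex t1 @ Y"] by (simp_all add: contract_redex_def)
  moreover have "?N (X0 @ redex t0 @ Z @ reduct1 t1 @ Y) = (\<lambda>w. \<alpha> c0 * ?N (X0 @ reduct1 t0 @ Z @ reduct1 t1 @ Y) w
                + \<beta> c0 * ?N (X0 @ reduct2 t0 @ Z @ reduct1 t1 @ Y) w)"
    and "?N (X0 @ redex t0 @ Z @ reduct2 t1 @ Y) = (\<lambda>w. \<alpha> c0 * ?N (X0 @ reduct1 t0 @ Z @ reduct2 t1 @ Y) w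
                + \<beta> c0 * ?N (X0 @ reduct2 t0 @ Z @ reduct2 t1 @ Y) w)"
    using IH[of X0 t0 "Z @ reduct1 t1 @ Y"] IH[of X0 t0 "Z @ reduct2 t1 @ Y"]
      inversions_reduct[of "X0 @ redex t0 @ Z" t1 Y] by (simp_all add: contract_redex_def c0_def)
  ultimately show ?thesis
    unfolding contract_redex_def c0_def[symmetric] c1_def[symmetric] by (simp add: algebra_simps)
qed

lemma normal_form_redex: "normal_form n \<alpha> \<beta> v (X @ redex t @ Y) = contract_redex n \<alpha> \<beta> v X t Y"
proof (induction "inversions (X @ redex t @ Y)" arbitrary: X t Y rule: less_induct)
  case less
  obtain X0 t0 Y0 where lm: "leftmost_redex (X @ redex t @ Y) = Some (X0, t0, Y0)"
    and "X0 = X \<and> t0 = t \<and> Y0 = Y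
      \<or> X = X0 @ [False] \<and> t0 = False \<and> t = True \<and> Y0 = True # Y
      \<or> (\<exists>Z. X = X0 @ redex t0 @ Z \<and> Y0 = Z @ redex t @ Y)"
    using leftmost_redex_append_redex by blast
  then consider (same) "X0 = X" "t0 = t" "Y0 = Y"
    | (overlap) "X = X0 @ [False]" "t0 = False" "t = True" "Y0 = True # Y"
    | (disjoint) Z where "X = X0 @ redex t0 @ Z" "Y0 = Z @ redex t @ Y"
    by blast
  then show ?case
  proof cases
    case same
    then show ?thesis using lm by (simp add: normal_form_leftmost)
  next
    case overlap
    then show ?thesis
      using lm contract_overlap[of X0 Y] less by (simp add: normal_form_leftmost)
  next
    case disjoint
    then show ?thesis
      using lm contract_disjoint[of X0 t0 Z t Y] less by (simp add: normal_form_leftmost)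
  qed
qed

end

section \<open>Normal words\<close>

definition normal_word :: "nat \<Rightarrow> nat \<Rightarrow> nat \<Rightarrow> bool list" where
  "normal_word a m b = replicate a True @ concat (replicate m [False, True]) @ replicate b False"

lemma normal_word_Cons:
  "True # normal_word a m b = normal_word (Suc a) m b"
  "False # normal_word 0 0 b = normal_word 0 0 (Suc b)"
  "False # normal_word 1 m b = normal_word 0 (Suc m) b"
  by (simp_all add: normal_word_def)

lemma length_normal_word [simp]: "length (normal_word a m b) = a + 2 * m + b"
  by (induction m) (simp_all add: normal_word_def)

lemma displacement_normal_word [simp]: "displacement (normal_word a m b) = int a - int b"
proof -
  have "displacement (concat (replicate m [False, True])) = 0"
    by (induction m) simp_all
  then show ?thesis
    by (simp add: normal_word_def displacement_def sum_list_replicate)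
qed

lemma normal_word_inject: "normal_word a m b = normal_word a' m' b' \<longleftrightarrow> a = a' \<and> m = m' \<and> b = b'"
proof
  assume eq: "normal_word a m b = normal_word a' m' b'"
  have "takeWhile (\<lambda>x. x) (normal_word a m b) = replicate a True" for a m b
  proof -
    have "takeWhile (\<lambda>x. x) (concat (replicate m [False, True]) @ replicate b False) = []"
      by (cases m; cases b) simp_all
    then show ?thesis by (induction a) (simp_all add: normal_word_def)
  qed
  then have "a = a'" using eq by (metis length_replicate)
  then show "a = a' \<and> m = m' \<and> b = b'"
    using arg_cong[OF eq, of length] arg_cong[OF eq, of displacement] by simp
qed simp

lemma leftmost_redex_normal_word: "leftmost_redex (normal_word a m b) = None"
proof -
  have "leftmost_redex (replicate b False) = None"
    by (induction b) (auto simp: leftmost_redex_Cons_eq_None Cons_replicate_eq eq_commute[of "replicate _ _"])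
  moreover have "concat (replicate m [False, True]) @ replicate b False \<noteq> True # Y" for m Y
    by (cases m; cases b) auto
  ultimately have "leftmost_redex (concat (replicate m [False, True]) @ replicate b False) = None"
    by (induction m) (auto simp: leftmost_redex_Cons_eq_None)
  then show ?thesis
    by (induction a) (simp_all add: normal_word_def leftmost_redex_Cons_eq_None)
qed

lemma leftmost_redex_eq_None_iff: "leftmost_redex bs = None \<longleftrightarrow> (\<exists>a m b. bs = normal_word a m b)"
proof
  show "leftmost_redex bs = None \<Longrightarrow> \<exists>a m b. bs = normal_word a m b"
  proof (induction bs)
    case Nil
    have "[] = normal_word 0 0 0" by (simp add: normal_word_def)
    then show ?case by blast
  next
    case (Cons c bs)
    then obtain a m b where bs: "bs = normal_word a m b"
      by (auto simp: leftmost_redex_Cons_eq_None)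
    consider "c" | "\<not> c" "a = 0" "m = 0" | "\<not> c" "a = 1" | "\<not> c" "a = 0" "m > 0" | "\<not> c" "a \<ge> 2"
      by linarith
    then show ?case
    proof cases
      case 1
      then show ?thesis using bs normal_word_Cons(1) by metis
    next
      case 2
      then show ?thesis using bs normal_word_Cons(2) by metis
    next
      case 3
      then show ?thesis using bs normal_word_Cons(3) by metis
    next
      case 4
      then show ?thesis using Cons.prems bs by (cases m) (simp_all add: normal_word_def)
    next
      case 5
      then obtain a' where "a = Suc (Suc a')" by (cases a; cases "a - 1") auto
      then show ?thesis using 5 Cons.prems bs by (simp add: normal_word_def)
    qed
  qed
qed (auto simp: leftmost_redex_normal_word)

section \<open>The ideal of relations\<close>

interpretation fs: vector_space "fscale :: 'a::field \<Rightarrow> (path \<Rightarrow> 'a) \<Rightarrow> path \<Rightarrow> 'a"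
  by unfold_locales (simp_all add: fscale_def fun_eq_iff algebra_simps)

lemma fscale_apply [simp]: "fscale c f x = c * f x"
  by (simp add: fscale_def)

lemma pmult_pvec:
  "pmult n (pvec (v, cs)) (pvec (w, ds)) = (if walk_end n v cs = w then pvec (v, cs @ ds) else 0)"
proof (rule ext, clarify)
  fix x es
  have summand: "pvec (v, cs) (x, take m es) * pvec (w, ds) (walk_end n x (take m es), drop m es) =
      (if m = length cs then (if walk_end n v cs = w \<and> (x, es) = (v, cs @ ds) then 1 else 0) else 0)"
    if "m \<le> length es" for m
    using that by (metis (no_types, lifting) Pair_inject append_eq_conv_conj length_take
        min_absorb2 mult_cancel_right1 mult_eq_0_iff pvec_def)
  have "pmult n (pvec (v, cs)) (pvec (w, ds)) (x, es) = (\<Sum>m\<le>length es.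
      if m = length cs then (if walk_end n v cs = w \<and> (x, es) = (v, cs @ ds) then 1 else 0) else 0)"
    unfolding pmult_def prod.case by (rule sum.cong[OF refl]) (simp only: atMost_iff summand)
  also have "\<dots> = (if walk_end n v cs = w then pvec (v, cs @ ds) else 0) (x, es)"
    by (simp add: pvec_def)
  finally show "pmult n (pvec (v, cs)) (pvec (w, ds)) (x, es) =
      (if walk_end n v cs = w then pvec (v, cs @ ds) else 0) (x, es)" .
qed

lemma pmult_linear:
  "pmult n (f - g) h = pmult n f h - pmult n g h"
  "pmult n f (g - h) = pmult n f g - pmult n f h"
  "pmult n (fscale a f) h = fscale a (pmult n f h)"
  "pmult n f (fscale a h) = fscale a (pmult n f h)"
  "pmult n 0 h = 0"
  by (auto simp: pmult_def fun_eq_iff sum_subtractf sum_distrib_left algebra_simps)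

lemma pmult_word_paths:
  "pmult n (pvec (word_path n v X)) (pvec (word_path n w Y)) =
     (if endpoint n v X = w then pvec (word_path n v (X @ Y)) else 0)"
  by (simp add: pmult_pvec arrows_of_append)

definition word_rel ::
  "nat \<Rightarrow> (nat \<Rightarrow> 'a::field) \<Rightarrow> (nat \<Rightarrow> 'a) \<Rightarrow> nat \<Rightarrow> bool list \<Rightarrow> bool \<Rightarrow> bool list \<Rightarrow> path \<Rightarrow> 'a" where
  "word_rel n \<alpha> \<beta> v X t Y = pvec (word_path n v (X @ redex t @ Y))
     - fscale (\<alpha> (rel_index n (endpoint n v X) t)) (pvec (word_path n v (X @ reduct1 t @ Y)))
     - fscale (\<beta> (rel_index n (endpoint n v X) t)) (pvec (word_path n v (X @ reduct2 t @ Y)))"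

lemma mod_eq_step: "Suc i mod n = step n i True" "(i + n - 1) mod n = step n i False"
  by (simp_all add: step_def)

lemma rel1_eq_word_rel: "0 < n \<Longrightarrow> i < n \<Longrightarrow> rel1 n \<alpha> \<beta> i = word_rel n \<alpha> \<beta> i [] True []"
  unfolding rel1_def mod_eq_step
  by (simp add: word_rel_def redex_def reduct1_def reduct2_def rel_index_def arrow_from_def step_step step_lt)

lemma rel2_eq_word_rel: "0 < n \<Longrightarrow> i < n \<Longrightarrow> rel2 n \<alpha> \<beta> i = word_rel n \<alpha> \<beta> (step n i True) [] False []"
  unfolding rel2_def mod_eq_step
  by (simp add: word_rel_def redex_def reduct1_def reduct2_def rel_index_def arrow_from_def step_step step_lt)

lemma rels_eq:
  assumes "0 < n"
  shows "rels n \<alpha> \<beta> = {word_rel n \<alpha> \<beta> w [] t [] | w t. w < n}"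
proof (intro equalityI subsetI)
  fix r
  assume "r \<in> rels n \<alpha> \<beta>"
  then obtain i where i: "i < n" and "r = rel1 n \<alpha> \<beta> i \<or> r = rel2 n \<alpha> \<beta> i"
    unfolding rels_def by blast
  then consider "r = word_rel n \<alpha> \<beta> i [] True []" | "r = word_rel n \<alpha> \<beta> (step n i True) [] False []"
    using rel1_eq_word_rel[OF assms] rel2_eq_word_rel[OF assms] by blast
  then show "r \<in> {word_rel n \<alpha> \<beta> w [] t [] | w t. w < n}"
    by cases (use i step_lt[OF assms] in blast)+
next
  fix r
  assume "r \<in> {word_rel n \<alpha> \<beta> w [] t [] | w t. w < n}"
  then obtain w t where r: "r = word_rel n \<alpha> \<beta> w [] t []" and w: "w < n"
    by blast
  show "r \<in> rels n \<alpha> \<beta>"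
  proof (cases t)
    case True
    then have "r = rel1 n \<alpha> \<beta> w"
      using r rel1_eq_word_rel[OF assms w, of \<alpha> \<beta>] by simp
    then show ?thesis unfolding rels_def using w by blast
  next
    case False
    then have "r = rel2 n \<alpha> \<beta> (step n w False)"
      using r rel2_eq_word_rel[OF assms step_lt[OF assms], of \<alpha> \<beta>] step_step(2)[OF assms w] by simp
    then show ?thesis unfolding rels_def using step_lt[OF assms] by blast
  qed
qed

lemma pmult_word_rel:
  assumes "0 < n" and "w < n"
  shows "pmult n (pmult n (pvec (word_path n v X)) (word_rel n \<alpha> \<beta> w [] t [])) (pvec (word_path n u Y)) =
    (if endpoint n v X = w \<and> endpoint n w (redex t) = u then word_rel n \<alpha> \<beta> v X t Y else 0)"
  using endpoint_reduct_word[OF assms]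
  by (auto simp: word_rel_def pmult_linear pmult_word_paths)

lemma rel_ideal_generator_cases:
  assumes "0 < n" and "valid_path n p" and "valid_path n q" and "r \<in> rels n \<alpha> \<beta>"
  shows "pmult n (pmult n (pvec p) r) (pvec q) \<in> insert 0 {word_rel n \<alpha> \<beta> v X t Y | v X t Y. v < n}"
proof -
  obtain v X u Y w t where "p = word_path n v X" "v < n" "q = word_path n u Y"
    and "r = word_rel n \<alpha> \<beta> w [] t []" and w: "w < n"
    using assms valid_path_iff_word_path[OF assms(1), of p] valid_path_iff_word_path[OF assms(1), of q]
      rels_eq[OF assms(1), of \<alpha> \<beta>] by auto
  then show ?thesis
    using pmult_word_rel[OF assms(1) w, of v X \<alpha> \<beta> t u Y]
    by (cases "endpoint n v X = w \<and> endpoint n w (redex t) = u") auto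
qed

lemma word_rel_is_generator:
  assumes "0 < n" and v: "v < n"
  shows "\<exists>p r q. word_rel n \<alpha> \<beta> v X t Y = pmult n (pmult n (pvec p) r) (pvec q)
      \<and> valid_path n p \<and> valid_path n q \<and> r \<in> rels n \<alpha> \<beta>"
proof -
  let ?w = "endpoint n v X"
  have w: "?w < n" using endpoint_lt[OF assms] .
  have "word_rel n \<alpha> \<beta> v X t Y = pmult n (pmult n (pvec (word_path n v X)) (word_rel n \<alpha> \<beta> ?w [] t []))
      (pvec (word_path n (endpoint n ?w (redex t)) Y))"
    using pmult_word_rel[OF assms(1) w, of v X \<alpha> \<beta> t "endpoint n ?w (redex t)" Y] by simp
  moreover have "valid_path n (word_path n v X)"
    and "valid_path n (word_path n (endpoint n ?w (redex t)) Y)"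
    using v endpoint_lt[OF assms(1) w] by (simp_all add: valid_word_path assms)
  moreover have "word_rel n \<alpha> \<beta> ?w [] t [] \<in> rels n \<alpha> \<beta>"
    unfolding rels_eq[OF assms(1)] using w by blast
  ultimately show ?thesis by blast
qed

lemma rel_ideal_eq_span:
  assumes "0 < n"
  shows "rel_ideal n \<alpha> \<beta> = fs.span {word_rel n \<alpha> \<beta> v X t Y | v X t Y. v < n}"
    (is "_ = fs.span ?G")
proof -
  let ?gens = "{pmult n (pmult n (pvec p) r) (pvec q) | p r q.
        valid_path n p \<and> valid_path n q \<and> r \<in> rels n \<alpha> \<beta>}"
  have "?gens \<subseteq> insert 0 ?G"
  proof
    fix g assume "g \<in> ?gens"
    then obtain p r q where "g = pmult n (pmult n (pvec p) r) (pvec q)"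
      and "valid_path n p" "valid_path n q" "r \<in> rels n \<alpha> \<beta>"
      by blast
    then show "g \<in> insert 0 ?G"
      using rel_ideal_generator_cases[OF assms, of p q r \<alpha> \<beta>] by simp
  qed
  then have "fs.span ?gens \<subseteq> fs.span ?G"
    by (subst fs.span_insert_0[symmetric]) (rule fs.span_mono)
  moreover have "?G \<subseteq> ?gens"
  proof
    fix g assume "g \<in> ?G"
    then obtain v X t Y where "g = word_rel n \<alpha> \<beta> v X t Y" and "v < n"
      by blast
    then show "g \<in> ?gens"
      using word_rel_is_generator[OF assms \<open>v < n\<close>, of \<alpha> \<beta> X t Y] by simp
  qed
  then have "fs.span ?G \<subseteq> fs.span ?gens"
    by (rule fs.span_mono)
  ultimately show ?thesis
    unfolding rel_ideal_def by (rule subset_antisym)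
qed

lemma subspace_rel_ideal: "fs.subspace (rel_ideal n \<alpha> \<beta>)"
  by (simp add: rel_ideal_def fs.subspace_span)

lemma word_rel_in_rel_ideal: "0 < n \<Longrightarrow> v < n \<Longrightarrow> word_rel n \<alpha> \<beta> v X t Y \<in> rel_ideal n \<alpha> \<beta>"
  unfolding rel_ideal_eq_span by (rule fs.span_base) blast

definition lift_to_paths :: "nat \<Rightarrow> nat \<Rightarrow> (bool list \<Rightarrow> 'a::field) \<Rightarrow> path \<Rightarrow> 'a" where
  "lift_to_paths n v g = (\<lambda>(w, cs). if w = v \<and> arrows_of n v (map fst cs) = cs then g (map fst cs) else 0)"

lemma lift_to_paths_indicator: "lift_to_paths n v (\<lambda>w. if w = bs then 1 else 0) = pvec (word_path n v bs)"
  by (auto simp: lift_to_paths_def pvec_def fun_eq_iff)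

lemma lift_to_paths_linear:
  "lift_to_paths n v (\<lambda>w. a * f w + b * g w) = fscale a (lift_to_paths n v f) + fscale b (lift_to_paths n v g)"
  by (auto simp: lift_to_paths_def fun_eq_iff)

lemma word_path_minus_normal_form_in_rel_ideal:
  "0 < n \<Longrightarrow> v < n \<Longrightarrow>
   pvec (word_path n v bs) - lift_to_paths n v (normal_form n \<alpha> \<beta> v bs) \<in> rel_ideal n \<alpha> \<beta>"
proof (induction n \<alpha> \<beta> v bs rule: normal_form.induct)
  case (1 n \<alpha> \<beta> v bs)
  show ?case
  proof (cases "leftmost_redex bs")
    case None
    have "pvec (word_path n v bs) - lift_to_paths n v (normal_form n \<alpha> \<beta> v bs) = 0"
      unfolding normal_form_normal[OF None] lift_to_paths_indicator by (rule diff_self)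
    then show ?thesis
      unfolding rel_ideal_def by (simp only: fs.span_zero)
  next
    case (Some r)
    then obtain X t Y where r: "leftmost_redex bs = Some (X, t, Y)" by (cases r) auto
    let ?a = "\<alpha> (rel_index n (endpoint n v X) t)" and ?b = "\<beta> (rel_index n (endpoint n v X) t)"
    let ?d = "\<lambda>cs. pvec (word_path n v cs) - lift_to_paths n v (normal_form n \<alpha> \<beta> v cs)"
    have "?d bs = word_rel n \<alpha> \<beta> v X t Y + fscale ?a (?d (X @ reduct1 t @ Y)) + fscale ?b (?d (X @ reduct2 t @ Y))"
      unfolding normal_form_leftmost[OF r] contract_redex_def lift_to_paths_linear word_rel_def
        leftmost_redex_SomeD[OF r, symmetric] fs.scale_right_diff_distrib
      by (simp add: algebra_simps)
    moreover have "?d (X @ reduct1 t @ Y) \<in> rel_ideal n \<alpha> \<beta>"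
      by (fact "1.IH"(1)[OF r refl refl "1.prems"])
    moreover have "?d (X @ reduct2 t @ Y) \<in> rel_ideal n \<alpha> \<beta>"
      by (fact "1.IH"(2)[OF r refl refl "1.prems"])
    ultimately show ?thesis
      using word_rel_in_rel_ideal[OF "1.prems"] subspace_rel_ideal
      by (metis fs.subspace_add fs.subspace_scale)
  qed
qed

lemma sum_fun_apply: "(sum f A) x = (\<Sum>a\<in>A. f a x)"
  by (induction A rule: infinite_finite_induct) auto

lemma sum_pvec_expansion:
  assumes "finite P" and "\<And>p. p \<notin> P \<Longrightarrow> f p = 0"
  shows "f = (\<Sum>p\<in>P. fscale (f p) (pvec p))"
proof
  fix x
  have "(\<Sum>p\<in>P. fscale (f p) (pvec p)) x = (\<Sum>p\<in>P. if x = p then f x else 0)"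
    unfolding sum_fun_apply by (intro sum.cong) (auto simp: pvec_def)
  also have "\<dots> = f x"
    using assms by (simp add: sum.delta)
  finally show "f x = (\<Sum>p\<in>P. fscale (f p) (pvec p)) x" by simp
qed

lemma dim_span_delta:
  fixes f :: "path \<Rightarrow> path \<Rightarrow> 'a::field"
  assumes "finite P" and delta: "\<And>p q. p \<in> P \<Longrightarrow> q \<in> P \<Longrightarrow> f p q = (if q = p then 1 else 0)"
  shows "fs.dim (fs.span (f ` P)) = card P"
proof -
  have inj: "inj_on f P"
    by (rule inj_onI) (metis delta one_neq_zero)
  have "fs.independent (f ` P)"
  proof (rule fs.independent_if_scalars_zero)
    fix u x
    assume sum: "(\<Sum>x\<in>f ` P. fscale (u x) x) = 0" and "x \<in> f ` P"
    then obtain q where q: "q \<in> P" "x = f q" by auto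
    have "0 = (\<Sum>x\<in>f ` P. fscale (u x) x) q" using sum by simp
    also have "\<dots> = (\<Sum>p\<in>P. if q = p then u (f p) else 0)"
      unfolding sum_fun_apply sum.reindex[OF inj] using q(1) by (intro sum.cong) (auto simp: delta)
    also have "\<dots> = u x" using q assms(1) by simp
    finally show "u x = 0" by simp
  qed (use assms(1) in simp)
  then have "fs.dim (fs.span (f ` P)) = card (f ` P)"
    by (rule fs.dim_span_eq_card_independent)
  then show ?thesis
    using card_image[OF inj] by simp
qed

lemma subspace_supported_on: "fs.subspace {f :: path \<Rightarrow> 'a::field. \<forall>p. f p \<noteq> 0 \<longrightarrow> p \<in> P}"
proof (rule fs.subspaceI)
  fix x y :: "path \<Rightarrow> 'a"
  assume "x \<in> {f. \<forall>p. f p \<noteq> 0 \<longrightarrow> p \<in> P}" "y \<in> {f. \<forall>p. f p \<noteq> 0 \<longrightarrow> p \<in> P}"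
  then have "x p = 0" "y p = 0" if "p \<notin> P" for p
    using that by blast+
  then show "x + y \<in> {f. \<forall>p. f p \<noteq> 0 \<longrightarrow> p \<in> P}" by fastforce
qed auto

lemma span_pvec:
  assumes "finite P"
  shows "fs.span (pvec ` P) = {f :: path \<Rightarrow> 'a::field. \<forall>p. f p \<noteq> 0 \<longrightarrow> p \<in> P}"
    (is "_ = ?C")
proof
  show "fs.span (pvec ` P) \<subseteq> ?C"
    by (rule fs.span_minimal[OF _ subspace_supported_on]) (auto simp: pvec_def split: if_splits)
  show "?C \<subseteq> fs.span (pvec ` P)"
  proof
    fix f assume "f \<in> ?C"
    then have "f = (\<Sum>p\<in>P. fscale (f p) (pvec p))"
      using sum_pvec_expansion[OF assms] by blast
    also have "\<dots> \<in> fs.span (pvec ` P)"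
      by (intro fs.span_sum fs.span_scale fs.span_base) simp
    finally show "f \<in> fs.span (pvec ` P)" .
  qed
qed

lemma dim_comp_space:
  assumes "0 < n" and "i < n"
  shows "fs.dim (comp_space n k i j :: (path \<Rightarrow> 'a::field) set) = card (paths_of n k i j)"
proof -
  have fin: "finite (paths_of n k i j)" using finite_paths_of[OF assms] .
  have eq: "comp_space n k i j = fs.span (pvec ` paths_of n k i j)"
    unfolding span_pvec[OF fin] comp_space_def ..
  show ?thesis
    unfolding eq by (rule dim_span_delta[OF fin]) (simp add: pvec_def)
qed

definition normal_paths :: "nat \<Rightarrow> nat \<Rightarrow> nat \<Rightarrow> nat \<Rightarrow> path set" where
  "normal_paths n k i j = {p \<in> paths_of n k i j. leftmost_redex (map fst (snd p)) = None}"

definition path_normal_form :: "nat \<Rightarrow> (nat \<Rightarrow> 'a::field) \<Rightarrow> (nat \<Rightarrow> 'a) \<Rightarrow> path \<Rightarrow> path \<Rightarrow> 'a" where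
  "path_normal_form n \<alpha> \<beta> p = lift_to_paths n (fst p) (normal_form n \<alpha> \<beta> (fst p) (map fst (snd p)))"

lemma path_normal_form_word_path:
  "path_normal_form n \<alpha> \<beta> (word_path n v bs) = lift_to_paths n v (normal_form n \<alpha> \<beta> v bs)"
  by (simp add: path_normal_form_def)

definition normal_form_on ::
  "nat \<Rightarrow> (nat \<Rightarrow> 'a::field) \<Rightarrow> (nat \<Rightarrow> 'a) \<Rightarrow> path set \<Rightarrow> (path \<Rightarrow> 'a) \<Rightarrow> path \<Rightarrow> 'a" where
  "normal_form_on n \<alpha> \<beta> P f = (\<lambda>x. \<Sum>p\<in>P. f p * path_normal_form n \<alpha> \<beta> p x)"

lemma normal_form_on_pvec:
  assumes "finite P"
  shows "normal_form_on n \<alpha> \<beta> P (pvec q) = (if q \<in> P then path_normal_form n \<alpha> \<beta> q else 0)"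
proof
  fix x
  have "normal_form_on n \<alpha> \<beta> P (pvec q) x = (\<Sum>p\<in>P. if p = q then path_normal_form n \<alpha> \<beta> p x else 0)"
    unfolding normal_form_on_def by (intro sum.cong) (auto simp: pvec_def)
  also have "\<dots> = (if q \<in> P then path_normal_form n \<alpha> \<beta> q else 0) x"
    using assms by (simp add: sum.delta')
  finally show "normal_form_on n \<alpha> \<beta> P (pvec q) x = (if q \<in> P then path_normal_form n \<alpha> \<beta> q else 0) x" .
qed

lemma normal_form_on_linear:
  "normal_form_on n \<alpha> \<beta> P 0 = 0"
  "normal_form_on n \<alpha> \<beta> P (f + g) = normal_form_on n \<alpha> \<beta> P f + normal_form_on n \<alpha> \<beta> P g"
  "normal_form_on n \<alpha> \<beta> P (f - g) = normal_form_on n \<alpha> \<beta> P f - normal_form_on n \<alpha> \<beta> P g"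
  "normal_form_on n \<alpha> \<beta> P (fscale c f) = fscale c (normal_form_on n \<alpha> \<beta> P f)"
  by (simp_all add: normal_form_on_def fun_eq_iff sum.distrib distrib_right sum_subtractf
      left_diff_distrib sum_distrib_left mult.assoc)

lemma subspace_normal_form_on_kernel: "fs.subspace {f. normal_form_on n \<alpha> \<beta> P f = 0}"
  by (rule fs.subspaceI) (simp_all add: normal_form_on_linear)

context
  fixes n :: nat and \<alpha> \<beta> :: "nat \<Rightarrow> 'a::field" and k i j :: nat
  assumes n: "0 < n" and i: "i < n"
begin

lemma normal_form_on_word_rel:
  assumes v: "v < n"
  shows "normal_form_on n \<alpha> \<beta> (paths_of n k i j) (word_rel n \<alpha> \<beta> v X t Y) = 0"
proof -
  let ?P = "paths_of n k i j" and ?c = "rel_index n (endpoint n v X) t"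
  have fin: "finite ?P" using finite_paths_of[OF n i] .
  have "word_path n v (X @ reduct1 t @ Y) \<in> ?P \<longleftrightarrow> word_path n v (X @ redex t @ Y) \<in> ?P"
    and "word_path n v (X @ reduct2 t @ Y) \<in> ?P \<longleftrightarrow> word_path n v (X @ redex t @ Y) \<in> ?P"
    using endpoint_reduct[OF n i, of X t Y] reduct_invariants[of t]
    by (auto simp: word_path_in_paths_of[OF n i])
  moreover have "path_normal_form n \<alpha> \<beta> (word_path n v (X @ redex t @ Y)) =
      fscale (\<alpha> ?c) (path_normal_form n \<alpha> \<beta> (word_path n v (X @ reduct1 t @ Y)))
      + fscale (\<beta> ?c) (path_normal_form n \<alpha> \<beta> (word_path n v (X @ reduct2 t @ Y)))"
    unfolding path_normal_form_word_path normal_form_redex[OF n v] contract_redex_def lift_to_paths_linear ..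
  ultimately show ?thesis
    unfolding word_rel_def normal_form_on_linear normal_form_on_pvec[OF fin] by simp
qed

lemma normal_form_on_rel_ideal:
  assumes "f \<in> rel_ideal n \<alpha> \<beta>"
  shows "normal_form_on n \<alpha> \<beta> (paths_of n k i j) f = 0"
proof -
  have "f \<in> fs.span {word_rel n \<alpha> \<beta> v X t Y | v X t Y. v < n}"
    using assms unfolding rel_ideal_eq_span[OF n] .
  then show ?thesis
    by (rule fs.span_induct[OF _ subspace_normal_form_on_kernel]) (auto intro: normal_form_on_word_rel)
qed

lemma path_normal_form_support:
  assumes p: "p \<in> paths_of n k i j" and x: "path_normal_form n \<alpha> \<beta> p x \<noteq> 0"
  shows "x \<in> normal_paths n k i j"
proof -
  obtain bs where bs: "p = word_path n i bs" "length bs = k" "endpoint n i bs = j"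
    using p by (auto simp: paths_of_eq[OF n i])
  obtain w cs where xw: "x = (w, cs)" by fastforce
  from x have "w = i" and cs: "arrows_of n i (map fst cs) = cs"
    and nf: "normal_form n \<alpha> \<beta> i bs (map fst cs) \<noteq> 0"
    by (auto simp: bs path_normal_form_word_path lift_to_paths_def xw split: if_splits)
  have "endpoint n i (map fst cs) = j"
    using normal_form_support[OF nf] endpoint_eqI[OF n i] bs(3) by metis
  moreover have "x = word_path n i (map fst cs)"
    using cs xw \<open>w = i\<close> by simp
  ultimately show ?thesis
    using normal_form_support[OF nf] bs(2) by (simp add: normal_paths_def word_path_in_paths_of[OF n i])
qed

lemma path_normal_form_of_normal: "p \<in> normal_paths n k i j \<Longrightarrow> path_normal_form n \<alpha> \<beta> p = pvec p"
  by (auto simp: normal_paths_def paths_of_eq[OF n i] path_normal_form_word_path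
      normal_form_normal lift_to_paths_indicator)

lemma pvec_minus_path_normal_form:
  "p \<in> paths_of n k i j \<Longrightarrow> pvec p - path_normal_form n \<alpha> \<beta> p \<in> rel_ideal n \<alpha> \<beta>"
  by (auto simp: paths_of_eq[OF n i] path_normal_form_word_path
      intro: word_path_minus_normal_form_in_rel_ideal[OF n i])

lemma pvec_minus_path_normal_form_in_comp_space:
  assumes p: "p \<in> paths_of n k i j"
  shows "pvec p - path_normal_form n \<alpha> \<beta> p \<in> comp_space n k i j"
  unfolding comp_space_def
proof (intro CollectI allI impI)
  fix x assume "(pvec p - path_normal_form n \<alpha> \<beta> p) x \<noteq> 0"
  then have "x = p \<or> path_normal_form n \<alpha> \<beta> p x \<noteq> 0"
    by (auto simp: pvec_def split: if_splits)
  then show "x \<in> paths_of n k i j"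
    using p path_normal_form_support[OF p, of x] by (auto simp: normal_paths_def)
qed

lemma rel_ideal_inter_comp_space_eq_span:
  "rel_ideal n \<alpha> \<beta> \<inter> comp_space n k i j =
     fs.span ((\<lambda>p. pvec p - path_normal_form n \<alpha> \<beta> p) ` (paths_of n k i j - normal_paths n k i j))"
  (is "?V = fs.span (?b ` (?P - ?N))")
proof
  show "?V \<subseteq> fs.span (?b ` (?P - ?N))"
  proof
    fix f assume f: "f \<in> ?V"
    have fin: "finite ?P" using finite_paths_of[OF n i] .
    have "f = (\<Sum>p\<in>?P. fscale (f p) (pvec p))"
      using f sum_pvec_expansion[OF fin] by (auto simp: comp_space_def)
    moreover have "normal_form_on n \<alpha> \<beta> ?P f = (\<Sum>p\<in>?P. fscale (f p) (path_normal_form n \<alpha> \<beta> p))"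
      by (simp add: normal_form_on_def fun_eq_iff sum_fun_apply)
    ultimately have "f = (\<Sum>p\<in>?P. fscale (f p) (?b p))"
      using normal_form_on_rel_ideal[of f] f
      by (simp add: fs.scale_right_diff_distrib sum_subtractf)
    also have "\<dots> = (\<Sum>p\<in>?P - ?N. fscale (f p) (?b p))"
      using path_normal_form_of_normal by (intro sum.mono_neutral_right[OF fin]) auto
    also have "\<dots> \<in> fs.span (?b ` (?P - ?N))"
      by (intro fs.span_sum fs.span_scale fs.span_base) simp
    finally show "f \<in> fs.span (?b ` (?P - ?N))" .
  qed
  show "fs.span (?b ` (?P - ?N)) \<subseteq> ?V"
    unfolding comp_space_def
    using subspace_rel_ideal subspace_supported_on pvec_minus_path_normal_form
      pvec_minus_path_normal_form_in_comp_space
    by (intro fs.span_minimal fs.subspace_inter) (auto simp: comp_space_def)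
qed

lemma dim_rel_ideal_inter_comp_space:
  "fs.dim (rel_ideal n \<alpha> \<beta> \<inter> comp_space n k i j) = card (paths_of n k i j - normal_paths n k i j)"
  unfolding rel_ideal_inter_comp_space_eq_span
proof (rule dim_span_delta)
  fix p q assume "p \<in> paths_of n k i j - normal_paths n k i j" "q \<in> paths_of n k i j - normal_paths n k i j"
  then show "(pvec p - path_normal_form n \<alpha> \<beta> p) q = (if q = p then 1 else 0)"
    using path_normal_form_support[of p q] by (auto simp: pvec_def)
qed (use finite_paths_of[OF n i] in simp)

lemma hdim_eq_card_normal_paths: "hdim n \<alpha> \<beta> k i j = card (normal_paths n k i j)"
proof -
  have "normal_paths n k i j \<subseteq> paths_of n k i j" by (auto simp: normal_paths_def)
  then show ?thesis
    using finite_paths_of[OF n i]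
    by (simp add: hdim_def dim_comp_space[OF n i] dim_rel_ideal_inter_comp_space card_Diff_subset
        card_mono diff_diff_cancel finite_subset)
qed

end

lemma hdim_eq_card_normal_words:
  assumes "0 < n" and "i < n"
  shows "hdim n \<alpha> \<beta> k i j = card {bs. length bs = k \<and> leftmost_redex bs = None \<and> endpoint n i bs = j}"
proof -
  have "normal_paths n k i j =
      word_path n i ` {bs. length bs = k \<and> leftmost_redex bs = None \<and> endpoint n i bs = j}"
    by (auto simp: normal_paths_def paths_of_eq[OF assms])
  moreover have "inj (word_path n i)"
    by (rule injI) simp
  ultimately show ?thesis
    by (simp add: hdim_eq_card_normal_paths[OF assms] card_image inj_on_subset)
qed

section \<open>Counting normal words\<close>

(* The number of walks u^a d^(k - a) from x to y, vertices taken modulo n.  Their generating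
   functions are the entries of (I - tM + t^2 I)^{-1}. *)
definition up_down_walks :: "nat \<Rightarrow> nat \<Rightarrow> int \<Rightarrow> int \<Rightarrow> int" where
  "up_down_walks n k x y = (\<Sum>a\<le>k. if int n dvd x + 2 * int a - int k - y then 1 else 0)"

lemma card_normal_words:
  assumes "0 < n" and "i < n" and "j < n"
  shows "int (card {bs. length bs = k \<and> leftmost_redex bs = None \<and> endpoint n i bs = j})
       = (\<Sum>m\<le>k div 2. up_down_walks n (k - 2 * m) (int i) (int j))"
proof -
  let ?W = "{bs. length bs = k \<and> leftmost_redex bs = None \<and> endpoint n i bs = j}"
  let ?f = "\<lambda>(m, a). normal_word a m (k - 2 * m - a)"
  let ?ok = "\<lambda>m a. endpoint n i (normal_word a m (k - 2 * m - a)) = j"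
  let ?T = "SIGMA m:{..k div 2}. {a \<in> {..k - 2 * m}. ?ok m a}"
  have "?W = ?f ` ?T"
  proof
    show "?W \<subseteq> ?f ` ?T"
    proof
      fix bs assume bs: "bs \<in> ?W"
      then obtain a m b where w: "bs = normal_word a m b"
        using leftmost_redex_eq_None_iff by blast
      with bs have "b = k - 2 * m - a" by auto
      with bs w show "bs \<in> ?f ` ?T"
        by (auto intro!: image_eqI[of _ _ "(m, a)"])
    qed
    show "?f ` ?T \<subseteq> ?W"
      by (auto simp: leftmost_redex_normal_word)
  qed
  moreover have "inj_on ?f ?T"
    by (auto simp: inj_on_def normal_word_inject)
  ultimately have "card ?W = (\<Sum>m\<le>k div 2. card {a \<in> {..k - 2 * m}. ?ok m a})"
    by (simp add: card_image card_SigmaI)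
  then have "int (card ?W) = (\<Sum>m\<le>k div 2. \<Sum>a\<le>k - 2 * m. if ?ok m a then 1 else 0)"
    by (simp add: of_nat_sum sum.If_cases Int_def)
  also have "\<dots> = (\<Sum>m\<le>k div 2. up_down_walks n (k - 2 * m) (int i) (int j))"
    unfolding up_down_walks_def
    by (intro sum.cong refl) (simp add: endpoint_eq_iff_dvd[OF assms] of_nat_diff algebra_simps)
  finally show ?thesis .
qed

lemma up_down_walks_sym: "up_down_walks n k x y = up_down_walks n k y x"
  unfolding up_down_walks_def
proof (rule sum.reindex_bij_witness[of _ "\<lambda>a. k - a" "\<lambda>a. k - a"])
  fix a assume "a \<in> {..k}"
  then have "y + 2 * int (k - a) - int k - x = - (x + 2 * int a - int k - y)"
    by (simp add: of_nat_diff)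
  then show "(if int n dvd y + 2 * int (k - a) - int k - x then 1 else 0) =
      (if int n dvd x + 2 * int a - int k - y then 1 else (0::int))"
    by (simp only: dvd_minus_iff)
qed auto

lemma hdim_sym:
  assumes "0 < n" and "i < n" and "j < n"
  shows "hdim n \<alpha> \<beta> k i j = hdim n \<alpha> \<beta> k j i"
proof -
  have "int (hdim n \<alpha> \<beta> k i j) = int (hdim n \<alpha> \<beta> k j i)"
    unfolding hdim_eq_card_normal_words[OF assms(1,2)] hdim_eq_card_normal_words[OF assms(1,3)]
      card_normal_words[OF assms] card_normal_words[OF assms(1,3,2)]
    by (simp add: up_down_walks_sym)
  then show ?thesis by simp
qed

lemma up_down_walks_cong:
  assumes "int n dvd y - y'"
  shows "up_down_walks n k x y = up_down_walks n k x y'"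
proof -
  have "int n dvd z - y \<longleftrightarrow> int n dvd z - y'" for z
    using assms dvd_add_right_iff[of "int n" "y - y'" "z - y"] by (simp add: algebra_simps)
  then show ?thesis
    unfolding up_down_walks_def by simp
qed

lemma up_down_walks_Suc:
  "up_down_walks n (Suc k) x y =
     (if int n dvd x - int k - 1 - y then 1 else 0) + up_down_walks n k x (y - 1)"
  unfolding up_down_walks_def sum.atMost_Suc_shift by (simp add: algebra_simps)

lemma up_down_walks_plus_one:
  "up_down_walks n k x (y + 1) =
     (if int n dvd x - int k - 1 - y then 1 else 0) + (if k = 0 then 0 else up_down_walks n (k - 1) x y)"
proof (cases k)
  case 0
  then show ?thesis by (simp add: up_down_walks_def algebra_simps)
next
  case (Suc k')
  show ?thesis
    unfolding Suc up_down_walks_def sum.atMost_Suc_shift by (simp add: algebra_simps)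
qed

definition up_down_fps :: "nat \<Rightarrow> int \<Rightarrow> int \<Rightarrow> int fps" where
  "up_down_fps n x y = Abs_fps (\<lambda>k. up_down_walks n k x y)"

lemma up_down_fps_recurrence:
  "(1 + fps_X ^ 2) * up_down_fps n x y - fps_X * (up_down_fps n x (y - 1) + up_down_fps n x (y + 1))
     = (if int n dvd x - y then 1 else 0)"
proof (rule fps_ext)
  fix k
  show "fps_nth ((1 + fps_X ^ 2) * up_down_fps n x y
        - fps_X * (up_down_fps n x (y - 1) + up_down_fps n x (y + 1))) k
      = fps_nth (if int n dvd x - y then 1 else 0) k"
  proof (cases k)
    case 0
    then show ?thesis by (simp add: up_down_fps_def up_down_walks_def distrib_right)
  next
    case (Suc k')
    then show ?thesis
      using up_down_walks_Suc[of n k' x y] up_down_walks_plus_one[of n k' x y]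
      by (cases k') (simp_all add: up_down_fps_def distrib_right fps_X_power_mult_nth)
  qed
qed

lemma up_down_fps_step:
  assumes "0 < n"
  shows "up_down_fps n x (int (step n j b)) = up_down_fps n x (int j + (if b then 1 else - 1))"
proof -
  have "int n dvd int (step n j b) - (int j + (if b then 1 else - 1))"
    unfolding int_step[OF assms] by (simp add: mod_eq_dvd_iff[symmetric])
  then show ?thesis
    unfolding up_down_fps_def by (simp add: up_down_walks_cong)
qed

lemma sum_atMost_half:
  fixes f :: "nat \<Rightarrow> 'a::comm_monoid_add" and k :: nat
  shows "(\<Sum>m\<le>k div 2. f (k - 2 * m)) =
    f k + (if 2 \<le> k then (\<Sum>m\<le>(k - 2) div 2. f (k - 2 - 2 * m)) else 0)"
proof (cases "2 \<le> k")
  case True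
  then obtain k' where k: "k = Suc (Suc k')" by (metis add_2_eq_Suc le_Suc_ex)
  then show ?thesis
    unfolding k by (simp add: sum.atMost_Suc_shift del: sum.atMost_Suc)
next
  case False
  then have "k div 2 = 0" by simp
  then show ?thesis using False by simp
qed

lemma hilbert_series_entry:
  assumes "0 < n" and "i < n" and "j < n"
  shows "(1 - fps_X ^ 2) * Abs_fps (\<lambda>k. int (hdim n \<alpha> \<beta> k i j)) = up_down_fps n (int i) (int j)"
proof (rule fps_ext)
  fix k
  have h: "int (hdim n \<alpha> \<beta> k i j) = (\<Sum>m\<le>k div 2. up_down_walks n (k - 2 * m) (int i) (int j))" for k
    unfolding hdim_eq_card_normal_words[OF assms(1,2)] by (rule card_normal_words[OF assms])
  show "fps_nth ((1 - fps_X ^ 2) * Abs_fps (\<lambda>k. int (hdim n \<alpha> \<beta> k i j))) k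
      = fps_nth (up_down_fps n (int i) (int j)) k"
    using sum_atMost_half[of "\<lambda>k. up_down_walks n k (int i) (int j)" k]
    by (simp add: h left_diff_distrib fps_X_power_mult_nth up_down_fps_def)
qed

section \<open>The Hilbert series\<close>

lemma card_bool_Collect: "int (card {b :: bool. P b}) = of_bool (P True) + of_bool (P False)"
proof -
  have "int (card {b :: bool. P b}) = (\<Sum>b\<in>UNIV. of_bool (P b))"
    by simp
  also have "\<dots> = (\<Sum>b\<in>{True, False}. of_bool (P b))"
    by (simp only: UNIV_bool insert_commute)
  finally show ?thesis by simp
qed

lemma adjacency_matrix_entry:
  assumes "0 < n" and "l < n" and "j < n"
  shows "adjacency_matrix n $$ (l, j) = of_bool (j = step n l True) + of_bool (j = step n l False)"
proof -
  have "a \<in> {a. snd a < n \<and> arr_src n a = l \<and> arr_tgt n a = j} \<longleftrightarrow>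
      a \<in> arrow_from n l ` {b. step n l b = j}" for a
  proof
    assume "a \<in> {a. snd a < n \<and> arr_src n a = l \<and> arr_tgt n a = j}"
    then have src: "snd a < n \<and> arr_src n a = l" and tgt: "arr_tgt n a = j" by simp_all
    from src have "a = arrow_from n l (fst a)"
      by (rule iffD1[OF arrow_from_eq_iff[OF assms(1,2)]])
    with tgt have "step n l (fst a) = j"
      by (metis arr_tgt_arrow_from)
    with \<open>a = arrow_from n l (fst a)\<close> show "a \<in> arrow_from n l ` {b. step n l b = j}"
      by blast
  next
    assume "a \<in> arrow_from n l ` {b. step n l b = j}"
    then obtain b where a: "a = arrow_from n l b" and "step n l b = j" by blast
    then have "arr_tgt n a = j" by simp
    moreover have "a = arrow_from n l (fst a)"
      by (simp add: a arrow_from_def)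
    then have "snd a < n \<and> arr_src n a = l"
      by (rule iffD2[OF arrow_from_eq_iff[OF assms(1,2)]])
    ultimately show "a \<in> {a. snd a < n \<and> arr_src n a = l \<and> arr_tgt n a = j}"
      by simp
  qed
  then have "{a. snd a < n \<and> arr_src n a = l \<and> arr_tgt n a = j} = arrow_from n l ` {b. step n l b = j}"
    by blast
  moreover have "inj (arrow_from n l)"
    by (rule injI) (auto simp: arrow_from_def split: if_splits)
  ultimately have "card {a. snd a < n \<and> arr_src n a = l \<and> arr_tgt n a = j} = card {b. step n l b = j}"
    by (simp add: card_image inj_on_subset)
  then show ?thesis
    using assms card_bool_Collect[of "\<lambda>b. step n l b = j"]
    by (simp add: adjacency_matrix_def eq_commute[of j])
qed

lemma dim_adjacency_matrix [simp]:
  "dim_row (adjacency_matrix n) = n" "dim_col (adjacency_matrix n) = n"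
  by (simp_all add: adjacency_matrix_def)

lemma dim_hilbert_matrix [simp]:
  "dim_row (hilbert_matrix n \<alpha> \<beta>) = n" "dim_col (hilbert_matrix n \<alpha> \<beta>) = n"
  by (simp_all add: hilbert_matrix_def)

lemma hilbert_matrix_entry:
  "i < n \<Longrightarrow> j < n \<Longrightarrow> hilbert_matrix n \<alpha> \<beta> $$ (i, j) = Abs_fps (\<lambda>k. int (hdim n \<alpha> \<beta> k i j))"
  by (simp add: hilbert_matrix_def)

definition hilbert_inverse :: "nat \<Rightarrow> int fps mat" where
  "hilbert_inverse n = (1 - fps_X ^ 2) \<cdot>\<^sub>m
     (1\<^sub>m n - fps_X \<cdot>\<^sub>m map_mat fps_const (adjacency_matrix n) + fps_X ^ 2 \<cdot>\<^sub>m 1\<^sub>m n)"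

lemma dim_hilbert_inverse [simp]:
  "dim_row (hilbert_inverse n) = n" "dim_col (hilbert_inverse n) = n"
  by (simp_all add: hilbert_inverse_def)

lemma hilbert_inverse_entry:
  assumes "0 < n" and "l < n" and "j < n"
  shows "hilbert_inverse n $$ (l, j) = (1 - fps_X ^ 2) * (1 + fps_X ^ 2) * of_bool (l = j)
    - (1 - fps_X ^ 2) * fps_X * (of_bool (l = step n j False) + of_bool (l = step n j True))"
proof -
  have "adjacency_matrix n $$ (l, j) = of_bool (l = step n j False) + of_bool (l = step n j True)"
    unfolding adjacency_matrix_entry[OF assms] eq_step_iff[OF assms] ..
  then have "fps_const (adjacency_matrix n $$ (l, j)) = of_bool (l = step n j False) + of_bool (l = step n j True)"
    by (simp add: numeral_fps_const)
  then show ?thesis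
    using assms by (simp add: hilbert_inverse_def algebra_simps)
qed

lemma sum_neighbours:
  fixes f :: "nat \<Rightarrow> 'a::comm_ring_1"
  assumes "j < n" "p < n" "q < n"
  shows "(\<Sum>l = 0..<n. f l * (a * of_bool (l = j) - b * (of_bool (l = p) + of_bool (l = q))))
       = a * f j - b * (f p + f q)"
  using assms by (simp add: algebra_simps sum.distrib sum_subtractf flip: sum_distrib_left)

lemma int_dvd_diff_iff: "i < n \<Longrightarrow> j < n \<Longrightarrow> int n dvd int i - int j \<longleftrightarrow> i = j"
proof -
  assume "i < n" "j < n"
  have "int n dvd int i - int j \<longleftrightarrow> int i mod int n = int j mod int n"
    by (rule mod_eq_dvd_iff[symmetric])
  also have "\<dots> \<longleftrightarrow> i = j"
    using \<open>i < n\<close> \<open>j < n\<close> by (simp add: mod_pos_pos_trivial)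
  finally show ?thesis .
qed

lemma hilbert_matrix_times_inverse:
  assumes "0 < n"
  shows "hilbert_matrix n \<alpha> \<beta> * hilbert_inverse n = 1\<^sub>m n"
proof (rule eq_matI)
  fix i j assume "i < dim_row (1\<^sub>m n :: int fps mat)" "j < dim_col (1\<^sub>m n :: int fps mat)"
  then have i: "i < n" and j: "j < n" by simp_all
  let ?H = "\<lambda>l. hilbert_matrix n \<alpha> \<beta> $$ (i, l)" and ?U = "up_down_fps n (int i)"
  have H: "(1 - fps_X ^ 2) * ?H l = ?U (int l)" if "l < n" for l
    unfolding hilbert_matrix_entry[OF i that] by (rule hilbert_series_entry[OF assms i that])
  have "(hilbert_matrix n \<alpha> \<beta> * hilbert_inverse n) $$ (i, j) =
      (\<Sum>l = 0..<n. ?H l * ((1 - fps_X ^ 2) * (1 + fps_X ^ 2) * of_bool (l = j)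
          - (1 - fps_X ^ 2) * fps_X * (of_bool (l = step n j False) + of_bool (l = step n j True))))"
    using i j by (simp add: scalar_prod_def hilbert_inverse_entry[OF assms])
  also have "\<dots> = (1 - fps_X ^ 2) * (1 + fps_X ^ 2) * ?H j
      - (1 - fps_X ^ 2) * fps_X * (?H (step n j False) + ?H (step n j True))"
    by (rule sum_neighbours[OF j step_lt[OF assms] step_lt[OF assms]])
  also have "\<dots> = (1 + fps_X ^ 2) * ((1 - fps_X ^ 2) * ?H j)
      - fps_X * ((1 - fps_X ^ 2) * ?H (step n j False) + (1 - fps_X ^ 2) * ?H (step n j True))"
    by (simp add: algebra_simps)
  also have "\<dots> = (1 + fps_X ^ 2) * ?U (int j) - fps_X * (?U (int j - 1) + ?U (int j + 1))"
    using H j step_lt[OF assms] by (simp add: up_down_fps_step[OF assms])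
  also have "\<dots> = 1\<^sub>m n $$ (i, j)"
    using up_down_fps_recurrence[of n "int i" "int j"] i j by (simp add: int_dvd_diff_iff)
  finally show "(hilbert_matrix n \<alpha> \<beta> * hilbert_inverse n) $$ (i, j) = 1\<^sub>m n $$ (i, j)" .
qed simp_all

lemma transpose_hilbert_matrix:
  "0 < n \<Longrightarrow> transpose_mat (hilbert_matrix n \<alpha> \<beta>) = hilbert_matrix n \<alpha> \<beta>"
  by (rule eq_matI) (simp_all add: hilbert_matrix_entry hdim_sym)

lemma transpose_hilbert_inverse:
  assumes "0 < n"
  shows "transpose_mat (hilbert_inverse n) = hilbert_inverse n"
proof (rule eq_matI)
  fix l j assume "l < dim_row (hilbert_inverse n)" "j < dim_col (hilbert_inverse n)"
  then have l: "l < n" and j: "j < n" by simp_all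
  show "transpose_mat (hilbert_inverse n) $$ (l, j) = hilbert_inverse n $$ (l, j)"
    using l j by (simp add: hilbert_inverse_entry[OF assms] eq_step_iff[OF assms j l] eq_commute[of j l]
        add.commute)
qed simp_all

lemma hilbert_inverse_times_matrix:
  assumes "0 < n"
  shows "hilbert_inverse n * hilbert_matrix n \<alpha> \<beta> = 1\<^sub>m n"
proof -
  have "hilbert_inverse n * hilbert_matrix n \<alpha> \<beta> = transpose_mat (hilbert_matrix n \<alpha> \<beta> * hilbert_inverse n)"
    using transpose_mult[of "hilbert_matrix n \<alpha> \<beta>" n n "hilbert_inverse n" n]
    by (simp add: carrier_matI transpose_hilbert_matrix[OF assms] transpose_hilbert_inverse[OF assms])
  then show ?thesis
    by (simp add: hilbert_matrix_times_inverse[OF assms])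
qed

lemma quartic_eq_hilbert_inverse:
  "1\<^sub>m n - fps_X \<cdot>\<^sub>m map_mat fps_const (adjacency_matrix n)
     + fps_X ^ 3 \<cdot>\<^sub>m map_mat fps_const (adjacency_matrix n) - fps_X ^ 4 \<cdot>\<^sub>m 1\<^sub>m n = hilbert_inverse n"
  by (rule eq_matI) (simp_all add: hilbert_inverse_def algebra_simps power2_eq_square power3_eq_cube
      power4_eq_xxxx)

theorem lemma3p5:
  fixes \<alpha> \<beta> :: "nat \<Rightarrow> 'a::field_char_0" and n :: nat
  assumes "n \<ge> 1"
    and "\<forall>p :: 'a poly. degree p > 0 \<longrightarrow> (\<exists>x. poly p x = 0)"
  defines "M \<equiv> map_mat fps_const (adjacency_matrix n)"
    and "h \<equiv> hilbert_matrix n \<alpha> \<beta>"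
    and "I \<equiv> (1\<^sub>m n :: int fps mat)"
    and "t \<equiv> (fps_X :: int fps)"
  shows "h * (I - t \<cdot>\<^sub>m M + t ^ 3 \<cdot>\<^sub>m M - t ^ 4 \<cdot>\<^sub>m I) = I
       \<and> (I - t \<cdot>\<^sub>m M + t ^ 3 \<cdot>\<^sub>m M - t ^ 4 \<cdot>\<^sub>m I) * h = I
       \<and> h * ((1 - t ^ 2) \<cdot>\<^sub>m (I - t \<cdot>\<^sub>m M + t ^ 2 \<cdot>\<^sub>m I)) = I
       \<and> ((1 - t ^ 2) \<cdot>\<^sub>m (I - t \<cdot>\<^sub>m M + t ^ 2 \<cdot>\<^sub>m I)) * h = I"
proof -
  have n: "0 < n" using assms(1) by simp
  have "I - t \<cdot>\<^sub>m M + t ^ 3 \<cdot>\<^sub>m M - t ^ 4 \<cdot>\<^sub>m I = hilbert_inverse n"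
    unfolding M_def I_def t_def by (rule quartic_eq_hilbert_inverse)
  moreover have "(1 - t ^ 2) \<cdot>\<^sub>m (I - t \<cdot>\<^sub>m M + t ^ 2 \<cdot>\<^sub>m I) = hilbert_inverse n"
    unfolding M_def I_def t_def hilbert_inverse_def ..
  moreover have "h * hilbert_inverse n = I" and "hilbert_inverse n * h = I"
    unfolding h_def I_def
    by (rule hilbert_matrix_times_inverse[OF n], rule hilbert_inverse_times_matrix[OF n])
  ultimately show ?thesis by simp
qed

end
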